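(* For $0<|q|<1$, the sequences $$\alpha_n=\frac{(-1)^n\left(q^{(-n^2+n+4)/2}(1-q^n)+q^{-n(n+5)/2}(1-q^{n+1})\right)}{1-q},\qquad\beta_n=\frac{(-1)^nq^{-n(n+5)/2}}{(q;q)_n}\qquad(n\ge0)$$ form a Bailey pair relative to $a=q$, i.e. $\beta_n=\sum_{r=0}^n\frac{\alpha_r}{(q;q)_{n-r}(q^2;q)_{n+r}}$ for all $n\ge0$.
   Context: $(a;q)_n=\prod_{k=0}^{n-1}(1-aq^k)$ with $(a;q)_0=1$. A Bailey pair relative to $a$ is a pair of sequences with $\beta_n=\sum_{r=0}^n\frac{\alpha_r}{(q;q)_{n-r}(aq;q)_{n+r}}$ for all $n\ge0$. *)

theory Defs
  imports "HOL-Analysis.Analysis"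
begin

definition qpoch :: "complex \<Rightarrow> complex \<Rightarrow> nat \<Rightarrow> complex" where
  "qpoch a q n = (\<Prod>k<n. 1 - a * q ^ k)"

definition bailey_pair :: "complex \<Rightarrow> complex \<Rightarrow> (nat \<Rightarrow> complex) \<Rightarrow> (nat \<Rightarrow> complex) \<Rightarrow> bool" where
  "bailey_pair q a \<alpha> \<beta> \<longleftrightarrow>
     (\<forall>n. \<beta> n = (\<Sum>r\<le>n. \<alpha> r / (qpoch q q (n - r) * qpoch (a * q) q (n + r))))"

end

theory Submission
  imports Defs
begin

text \<open>
  Since \<open>(1 - q) (q\<^sup>2;q)\<^sub>n\<^sub>+\<^sub>r = (q;q)\<^sub>n\<^sub>+\<^sub>r\<^sub>+\<^sub>1\<close>, the Bailey sum is \<open>S n = \<Sum>r\<le>n. F n r\<close> with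
  \<open>F n r = (-1)^r b r w r / ((q;q)\<^sub>n\<^sub>-\<^sub>r (q;q)\<^sub>n\<^sub>+\<^sub>r\<^sub>+\<^sub>1)\<close>, where \<open>w r = q^(-r(r+5)/2)\<close> and
  \<open>b r = 1 - q^(r+1) + q^(3r+2) (1 - q^r)\<close>. Zeilberger's algorithm yields a rational
  certificate \<open>G\<close> with \<open>F (n+1) r - c n F n r = G n r - G n (r-1)\<close> for \<open>r \<le> n\<close>, where
  \<open>c n = -1 / (q^(n+3) (1 - q^(n+1)))\<close>, and \<open>G n n = - F (n+1) (n+1)\<close>. Summing over \<open>r\<close>
  gives \<open>S (n+1) = c n S n\<close>, which is also the recurrence of \<open>(-1)^n w n / (q;q)\<^sub>n\<close>.
\<close>

definition quad_weight :: "complex \<Rightarrow> nat \<Rightarrow> complex" where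
  "quad_weight q r = inverse (q ^ (r * (r + 5) div 2))"

definition alpha_factor :: "complex \<Rightarrow> nat \<Rightarrow> complex" where
  "alpha_factor q r = (1 - q ^ (r + 1)) + q ^ (3 * r + 2) * (1 - q ^ r)"

definition summand :: "complex \<Rightarrow> nat \<Rightarrow> nat \<Rightarrow> complex" where
  "summand q n r =
     (-1) ^ r * alpha_factor q r * quad_weight q r / (qpoch q q (n - r) * qpoch q q (n + r + 1))"

definition recurrence_coeff :: "complex \<Rightarrow> nat \<Rightarrow> complex" where
  "recurrence_coeff q n = -1 / (q ^ 3 * q ^ n * (1 - q * q ^ n))"

definition cert_numerator :: "complex \<Rightarrow> complex \<Rightarrow> complex \<Rightarrow> complex" where
  "cert_numerator q x y =
     y * (1 - (q + q^2) * y + (q^2 + q^3) * y^2 - q^3 * y^3) - q * x + (q^3 + q^2) * x * y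
     - (q^4 + q^2) * x * y^2 + q^3 * x * y^3 + q^3 * (1 - q) * x^2 * y - q^4 * (1 - q) * x^2 * y^2"

definition certificate :: "complex \<Rightarrow> nat \<Rightarrow> nat \<Rightarrow> complex" where
  "certificate q n k =
     (-1) ^ k * quad_weight q k * cert_numerator q (q ^ n) (q ^ k) /
     (q ^ 3 * q ^ n * q ^ k * (1 - q * q ^ n) * qpoch q q (n + 1 - k) * qpoch q q (n + k + 2))"

text \<open>
  The certificate identities, with \<open>p\<close>, \<open>P\<close> standing for q-Pochhammer values and
  \<open>a, b, a1, a2, d, e\<close> for the factors \<open>1 - q^j\<close> by which they grow.
\<close>

lemma certificate_identity_first:
  fixes q x p a b :: complex
  assumes nonzero: "q \<noteq> 0" "x \<noteq> 0" "p \<noteq> 0" "a \<noteq> 0" "b \<noteq> 0"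
    and a: "a = 1 - q * x" and b: "b = 1 - q^2 * x"
  shows "(1 - q) / ((p * a) * (p * a * b)) - (-1 / (q^3 * x * a)) * ((1 - q) / (p * (p * a)))
       = cert_numerator q x 1 / (q^3 * x * a * (p * a) * (p * a * b))"
  using nonzero
  by (simp add: field_simps) (simp add: a b cert_numerator_def eval_nat_numeral algebra_simps)

lemma certificate_identity_step:
  fixes q y z p P s w a1 a2 e d :: complex
  assumes nonzero: "q \<noteq> 0" "y \<noteq> 0" "z \<noteq> 0" "p \<noteq> 0" "P \<noteq> 0"
      "a1 \<noteq> 0" "a2 \<noteq> 0" "e \<noteq> 0" "d \<noteq> 0"
    and a1: "a1 = 1 - q * z" and a2: "a2 = 1 - q^2 * z"
    and e: "e = 1 - q^4 * y^2 * z" and d: "d = 1 - q^2 * y * z"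
  shows "- s * (1 - q^2 * y + q^5 * y^3 * (1 - q * y)) * (w / (q^3 * y)) / ((p * a1) * (P * e))
       - (-1 / (q^3 * (q * y * z) * d))
         * (- s * (1 - q^2 * y + q^5 * y^3 * (1 - q * y)) * (w / (q^3 * y)) / (p * P))
     = - s * (w / (q^3 * y)) * cert_numerator q (q * y * z) (q * y)
         / (q^3 * (q * y * z) * (q * y) * d * (p * a1) * (P * e))
       - s * w * cert_numerator q (q * y * z) y / (q^3 * (q * y * z) * y * d * (p * a1 * a2) * P)"
  using nonzero by (simp add: field_simps) (unfold a1 a2 e d cert_numerator_def, algebra)

lemma certificate_identity_last:
  fixes q x P s w e d :: complex
  assumes nonzero: "q \<noteq> 0" "x \<noteq> 0" "P \<noteq> 0" "1 - q \<noteq> 0" "e \<noteq> 0" "d \<noteq> 0"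
    and e: "e = 1 - q^3 * x^2" and d: "d = 1 - q * x"
  shows "s * w * cert_numerator q x x / (q^3 * x * x * d * (1 - q) * P)
       = s * (1 - q^2 * x + q^5 * x^3 * (1 - q * x)) * (w / (q^3 * x)) / (P * e)"
  using nonzero by (simp add: field_simps) (unfold e d cert_numerator_def, algebra)

lemma qpoch_0 [simp]: "qpoch a q 0 = 1"
  unfolding qpoch_def by simp

lemma qpoch_Suc: "qpoch a q (Suc m) = qpoch a q m * (1 - a * q ^ m)"
  unfolding qpoch_def by simp

lemma qpoch_q_Suc: "qpoch q q (Suc m) = qpoch q q m * (1 - q ^ Suc m)"
  by (simp add: qpoch_Suc)

lemma qpoch_shift: "(1 - q) * qpoch (q * q) q m = qpoch q q (Suc m)"
  unfolding qpoch_def by (simp add: prod.lessThan_Suc_shift mult.assoc del: prod.lessThan_Suc)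

lemma power_ne_one_if_norm_less_one:
  fixes q :: complex
  assumes "norm q < 1" "0 < j"
  shows "q ^ j \<noteq> 1"
proof
  assume "q ^ j = 1"
  then have "norm q ^ j = 1" by (metis norm_one norm_power)
  moreover have "norm q ^ j < 1"
    using assms by (simp add: power_less_one_iff)
  ultimately show False by simp
qed

lemma quad_weight_Suc:
  assumes "q \<noteq> 0"
  shows "quad_weight q (Suc k) = quad_weight q k / (q ^ 3 * q ^ k)"
proof -
  have "Suc k * (Suc k + 5) div 2 = k * (k + 5) div 2 + (k + 3)"
    by (simp add: algebra_simps)
  with assms show ?thesis
    unfolding quad_weight_def by (simp add: power_add field_simps)
qed

lemma alpha_factor_Suc:
  "alpha_factor q (Suc k) = 1 - q^2 * q^k + q^5 * (q^k)^3 * (1 - q * q^k)"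
  unfolding alpha_factor_def
  by (simp add: power_add power_mult_distrib algebra_simps eval_nat_numeral)

lemma int_quad_exponent: "int r * (int r + 5) = 2 * int (r * (r + 5) div 2)"
proof -
  have "even (r * (r + 5))" by simp
  then obtain t where t: "r * (r + 5) = 2 * t" by (elim evenE)
  then have "r * (r + 5) div 2 = t" by simp
  moreover have "int r * (int r + 5) = 2 * int t" using arg_cong[OF t, of int] by simp
  ultimately show ?thesis by simp
qed

lemma power_int_quad_weight:
  fixes q :: complex
  shows "q powi (- (int r * (int r + 5)) div 2) = quad_weight q r"
proof -
  define t where "t = r * (r + 5) div 2"
  have "- (int r * (int r + 5)) div 2 = - int t"
    unfolding int_quad_exponent t_def[symmetric] by simp
  then show ?thesis
    unfolding quad_weight_def t_def[symmetric] by (simp add: power_int_minus)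
qed

lemma power_int_alpha_exponent:
  fixes q :: complex
  assumes "q \<noteq> 0"
  shows "q powi ((4 + int r - int r * int r) div 2) = q ^ (3 * r + 2) * quad_weight q r"
proof -
  define t where "t = r * (r + 5) div 2"
  have "int r * (int r + 5) = 2 * int t"
    unfolding int_quad_exponent t_def ..
  then have "(4 + int r - int r * int r) div 2 = int (3 * r + 2) - int t"
    by (simp add: algebra_simps)
  moreover have "q powi (int (3 * r + 2) - int t) = q powi int (3 * r + 2) / q powi int t"
    using assms by (simp add: power_int_diff)
  moreover have "\<dots> = q ^ (3 * r + 2) / q ^ t"
    by (simp only: power_int_of_nat)
  ultimately show ?thesis
    unfolding quad_weight_def t_def[symmetric] by (simp add: divide_inverse)
qed

context
  fixes q :: complex
  assumes q_nonzero: "q \<noteq> 0"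
    and not_root_of_unity: "\<And>j. 0 < j \<Longrightarrow> q ^ j \<noteq> 1"
begin

lemma one_minus_power_nonzero: "0 < j \<Longrightarrow> 1 - q ^ j \<noteq> 0"
  using not_root_of_unity by simp

lemma qpoch_nonzero: "qpoch q q m \<noteq> 0"
  by (induction m) (simp_all add: qpoch_q_Suc not_root_of_unity del: power_Suc)

lemma summand_recurrence_first:
  "summand q (n + 1) 0 - recurrence_coeff q n * summand q n 0 = certificate q n 0"
proof -
  define p where "p = qpoch q q n"
  define x where "x = q ^ n"
  define a where "a = 1 - q * x"
  define b where "b = 1 - q^2 * x"
  have x: "x \<noteq> 0" using q_nonzero by (simp add: x_def)
  have a: "a \<noteq> 0" and b: "b \<noteq> 0"
    using one_minus_power_nonzero[of "Suc n"] one_minus_power_nonzero[of "Suc (Suc n)"]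
    by (simp_all add: a_def b_def x_def power2_eq_square mult.assoc)
  have P1: "qpoch q q (n + 1) = p * a" and P2: "qpoch q q (n + 2) = p * a * b"
    by (simp_all add: p_def a_def b_def x_def qpoch_q_Suc power2_eq_square numeral_2_eq_2)
  have "summand q (n + 1) 0 = (1 - q) / ((p * a) * (p * a * b))"
    using P1 P2 by (simp add: summand_def alpha_factor_def quad_weight_def numeral_2_eq_2)
  moreover have "summand q n 0 = (1 - q) / (p * (p * a))"
    using P1 by (simp add: summand_def alpha_factor_def quad_weight_def p_def)
  moreover have "certificate q n 0 = cert_numerator q x 1 / (q^3 * x * a * (p * a) * (p * a * b))"
    using P1 P2 by (simp add: certificate_def quad_weight_def x_def a_def numeral_2_eq_2)
  moreover have "recurrence_coeff q n = -1 / (q^3 * x * a)"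
    by (simp add: recurrence_coeff_def x_def a_def)
  ultimately show ?thesis
    using certificate_identity_first[OF q_nonzero x qpoch_nonzero[of n] a b a_def b_def]
    by (simp add: p_def)
qed

lemma summand_recurrence_step:
  assumes "k < n"
  shows "summand q (n + 1) (k + 1) - recurrence_coeff q n * summand q n (k + 1)
       = certificate q n (k + 1) - certificate q n k"
proof -
  define m where "m = n - Suc k"
  have n: "n = m + k + 1" using assms by (simp add: m_def)
  define y where "y = q ^ k"
  define z where "z = q ^ m"
  define p where "p = qpoch q q m"
  define P where "P = qpoch q q (n + k + 2)"
  define s where "s = ((-1) ^ k :: complex)"
  define w where "w = quad_weight q k"
  define a1 where "a1 = 1 - q * z"
  define a2 where "a2 = 1 - q^2 * z"
  define e where "e = 1 - q^4 * y^2 * z"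
  define d where "d = 1 - q^2 * y * z"
  have qn: "q ^ n = q * y * z" and qSn: "q * q ^ n = q^2 * y * z"
    by (simp_all add: n y_def z_def power_add power2_eq_square)
  have qe: "q ^ (n + k + 3) = q^4 * y^2 * z"
    by (simp add: n y_def z_def power_add power2_eq_square eval_nat_numeral algebra_simps)
  have y: "y \<noteq> 0" and z: "z \<noteq> 0" using q_nonzero by (simp_all add: y_def z_def)
  have a1: "a1 \<noteq> 0" and a2: "a2 \<noteq> 0"
    using one_minus_power_nonzero[of "Suc m"] one_minus_power_nonzero[of "Suc (Suc m)"]
    by (simp_all add: a1_def a2_def z_def power2_eq_square mult.assoc)
  have e: "e \<noteq> 0" and d: "d \<noteq> 0"
    using one_minus_power_nonzero[of "n + k + 3"] one_minus_power_nonzero[of "Suc n"] qe qSn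
    by (simp_all add: e_def d_def)
  have Pm0: "qpoch q q (n - (k + 1)) = p"
    and Pm1: "qpoch q q (n + 1 - (k + 1)) = p * a1"
    and Pm2: "qpoch q q (n + 1 - k) = p * a1 * a2"
    by (simp_all add: n p_def a1_def a2_def z_def qpoch_q_Suc Suc_diff_le power2_eq_square)
  have PL1: "qpoch q q (n + 1 + (k + 1) + 1) = P * e"
    using qpoch_q_Suc[of q "n + k + 2"] qe by (simp add: P_def e_def numeral_3_eq_3)
  have alpha: "alpha_factor q (k + 1) = 1 - q^2 * y + q^5 * y^3 * (1 - q * y)"
    and weight: "quad_weight q (k + 1) = w / (q^3 * y)"
    and sign: "((-1) ^ (k + 1) :: complex) = - s"
    using alpha_factor_Suc quad_weight_Suc[OF q_nonzero] by (simp_all add: y_def w_def s_def)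
  have "summand q (n + 1) (k + 1)
      = - s * (1 - q^2 * y + q^5 * y^3 * (1 - q * y)) * (w / (q^3 * y)) / ((p * a1) * (P * e))"
    unfolding summand_def Pm1 PL1 alpha weight sign by simp
  moreover have "summand q n (k + 1)
      = - s * (1 - q^2 * y + q^5 * y^3 * (1 - q * y)) * (w / (q^3 * y)) / (p * P)"
    unfolding summand_def Pm0 alpha weight sign by (simp add: P_def)
  moreover have "certificate q n (k + 1) = - s * (w / (q^3 * y)) * cert_numerator q (q * y * z) (q * y)
      / (q^3 * (q * y * z) * (q * y) * d * (p * a1) * (P * e))"
    unfolding certificate_def weight sign using Pm1 PL1 qn qSn by (simp add: d_def y_def)
  moreover have "certificate q n k
      = s * w * cert_numerator q (q * y * z) y / (q^3 * (q * y * z) * y * d * (p * a1 * a2) * P)"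
    unfolding certificate_def Pm2 using qn qSn by (simp add: d_def y_def s_def w_def P_def)
  moreover have "recurrence_coeff q n = -1 / (q^3 * (q * y * z) * d)"
    unfolding recurrence_coeff_def d_def qSn[symmetric] qn[symmetric] ..
  ultimately show ?thesis
    using certificate_identity_step[where s = s and w = w, OF q_nonzero y z
        qpoch_nonzero[of m] qpoch_nonzero[of "n + k + 2"] a1 a2 e d a1_def a2_def e_def d_def]
    by (simp add: p_def P_def)
qed

lemma summand_recurrence_telescoped:
  "k \<le> n \<Longrightarrow>
   (\<Sum>r\<le>k. summand q (n + 1) r - recurrence_coeff q n * summand q n r) = certificate q n k"
proof (induction k)
  case 0
  then show ?case using summand_recurrence_first by simp
next
  case (Suc k)
  then show ?case using summand_recurrence_step[of k n] by simp
qed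

lemma certificate_diagonal: "certificate q n n = - summand q (n + 1) (n + 1)"
proof -
  define x where "x = q ^ n"
  define P where "P = qpoch q q (n + n + 2)"
  define e where "e = 1 - q^3 * x^2"
  define d where "d = 1 - q * x"
  have x: "x \<noteq> 0" using q_nonzero by (simp add: x_def)
  have q1: "1 - q \<noteq> 0" using one_minus_power_nonzero[of 1] by simp
  have qe: "q ^ (n + n + 3) = q^3 * x^2"
    by (simp add: x_def power_add power2_eq_square eval_nat_numeral algebra_simps)
  have e: "e \<noteq> 0" and d: "d \<noteq> 0"
    using one_minus_power_nonzero[of "n + n + 3"] one_minus_power_nonzero[of "Suc n"] qe
    by (simp_all add: e_def d_def x_def)
  have PL1: "qpoch q q (n + 1 + (n + 1) + 1) = P * e"
    using qpoch_q_Suc[of q "n + n + 2"] qe by (simp add: P_def e_def numeral_3_eq_3)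
  have "certificate q n n = (-1) ^ n * quad_weight q n * cert_numerator q x x
      / (q^3 * x * x * d * (1 - q) * P)"
    by (simp add: certificate_def P_def d_def x_def qpoch_Suc)
  moreover have "summand q (n + 1) (n + 1) = - ((-1) ^ n * (1 - q^2 * x + q^5 * x^3 * (1 - q * x))
      * (quad_weight q n / (q^3 * x)) / (P * e))"
    unfolding summand_def PL1
    using alpha_factor_Suc[of q n] quad_weight_Suc[OF q_nonzero, of n] by (simp add: x_def)
  ultimately show ?thesis
    using certificate_identity_last[where s = "(-1) ^ n" and w = "quad_weight q n",
        OF q_nonzero x qpoch_nonzero[of "n + n + 2"] q1 e d e_def d_def] by (simp add: P_def)
qed

lemma summand_sum: "(\<Sum>r\<le>n. summand q n r) = (-1) ^ n * quad_weight q n / qpoch q q n"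
proof (induction n)
  case 0
  then show ?case
    using one_minus_power_nonzero[of 1] by (simp add: summand_def alpha_factor_def quad_weight_def qpoch_def)
next
  case (Suc n)
  let ?c = "recurrence_coeff q n"
  have "(\<Sum>r\<le>Suc n. summand q (Suc n) r)
      = (\<Sum>r\<le>n. summand q (n + 1) r - ?c * summand q n r) + ?c * (\<Sum>r\<le>n. summand q n r)
        + summand q (n + 1) (n + 1)"
    by (simp add: sum_subtractf sum_distrib_left)
  also have "\<dots> = ?c * (\<Sum>r\<le>n. summand q n r)"
    using summand_recurrence_telescoped[of n n] certificate_diagonal[of n] by simp
  also have "\<dots> = (-1) ^ Suc n * quad_weight q (Suc n) / qpoch q q (Suc n)"
    using q_nonzero one_minus_power_nonzero[of "Suc n"] qpoch_nonzero[of n]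
    by (simp add: Suc.IH recurrence_coeff_def quad_weight_Suc qpoch_q_Suc field_simps)
  finally show ?case .
qed

lemma bailey_summand:
  "(-1) ^ r * (q powi ((4 + int r - int r * int r) div 2) * (1 - q ^ r)
      + q powi (- (int r * (int r + 5)) div 2) * (1 - q ^ (r + 1))) / (1 - q)
    / (qpoch q q (n - r) * qpoch (q * q) q (n + r))
   = summand q n r"
proof -
  have q1: "1 - q \<noteq> 0" using one_minus_power_nonzero[of 1] by simp
  have alpha: "(-1) ^ r * (q powi ((4 + int r - int r * int r) div 2) * (1 - q ^ r)
      + q powi (- (int r * (int r + 5)) div 2) * (1 - q ^ (r + 1)))
    = (-1) ^ r * alpha_factor q r * quad_weight q r"
    unfolding power_int_quad_weight power_int_alpha_exponent[OF q_nonzero] alpha_factor_def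
    by (simp add: algebra_simps)
  have shift: "qpoch (q * q) q (n + r) = qpoch q q (n + r + 1) / (1 - q)"
    using qpoch_shift[of q "n + r"] q1 by (simp add: field_simps)
  show ?thesis
    unfolding alpha shift summand_def
    using q1 qpoch_nonzero[of "n - r"] qpoch_nonzero[of "n + r + 1"] by (simp add: field_simps)
qed

end

theorem mainTheorem11:
  fixes q :: complex
  assumes "0 < norm q" and "norm q < 1"
  shows "bailey_pair q q
     (\<lambda>n. (-1) ^ n * (q powi ((4 + int n - int n * int n) div 2) * (1 - q ^ n)
                     + q powi (- (int n * (int n + 5)) div 2) * (1 - q ^ (n + 1))) / (1 - q))
     (\<lambda>n. (-1) ^ n * q powi (- (int n * (int n + 5)) div 2) / qpoch q q n)"
proof -
  have q_nonzero: "q \<noteq> 0" using assms(1) by auto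
  have not_root_of_unity: "\<And>j. 0 < j \<Longrightarrow> q ^ j \<noteq> 1"
    using power_ne_one_if_norm_less_one[OF assms(2)] .
  show ?thesis
    unfolding bailey_pair_def
    using bailey_summand[OF q_nonzero not_root_of_unity]
      summand_sum[OF q_nonzero not_root_of_unity]
    by (simp add: power_int_quad_weight)
qed

end
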